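(* Let $\kappa$ be an infinite cardinal, $(G,f)\in\mathcal C$ with $G=(V,E)$ and $|V|=\kappa^+$. Then $G$ possesses a perfect $f$-factor if and only if there is an increasing continuous sequence $(A_\alpha)_{\alpha<\kappa^+}$ of subsets of $V$ such that (i) $A_0=\emptyset$ and $V=\bigcup_{\alpha<\kappa^+}A_\alpha$; (ii) $|A_{\alpha+1}\setminus A_\alpha|=\kappa$ for all $\alpha<\kappa^+$; (iii) for every $\alpha<\kappa^+$, letting $B_\alpha=A_{\alpha+1}\setminus(A_\alpha\setminus f^{-1}(\kappa^+))$ and $g_\alpha=f\restriction B_\alpha$, the graph $\bigl(B_\alpha,\{\{x,y\}\in E: x\in B_\alpha,\ y\in A_{\alpha+1}\setminus A_\alpha\}\bigr)$ has a $\kappa$-perfect $g_\alpha$-factor.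
   Context: A graph is $G=(V,E)$ with $V$ a nonempty set and $E\subseteq\{e\subseteq V:|e|=2\}$. For $F\subseteq E$ and $x\in V$, $d_F(x)$ is the cardinal $|\{e\in F:x\in e\}|$. For $f:V\to$ Cardinals, an $f$-factor of $G$ is $F\subseteq E$ with $d_F(x)\le f(x)$ for all $x$; it is perfect if $d_F(x)=f(x)$ for all $x$; $f^{-1}(\lambda)=\{x\in V:f(x)=\lambda\}$. For an infinite cardinal $\kappa$, an $f$-factor $F$ is $\kappa$-perfect if $d_F(x)=f(x)$ for all $x$ with $f(x)\le\kappa$ and $d_F(x)>0$ for all $x$ with $f(x)>\kappa$. $\mathcal C$ is the class of all pairs $(G,f)$ with $G=(V,E)$ a graph, $f:V\to$ Cardinals, and $f(x)\le d_E(x)$ for all $x\in V$. A sequence $(A_\alpha)_{\alpha<\kappa^+}$ is increasing continuous if $A_\alpha\subseteq A_\beta$ for $\alpha<\beta$ and $A_\lambda=\bigcup_{\alpha<\lambda}A_\alpha$ for limit $\lambda$. *)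

theory Defs
  imports Main
begin

unbundle cardinal_syntax

text \<open>A cardinal-valued function f on vertices is represented by f :: 'a => 'b set,
  the value at x being the cardinal |f x|.\<close>

definition is_graph :: "'a set \<Rightarrow> 'a set set \<Rightarrow> bool" where
  "is_graph V E \<longleftrightarrow> V \<noteq> {} \<and> (\<forall>e\<in>E. e \<subseteq> V \<and> (\<exists>x y. x \<noteq> y \<and> e = {x, y}))"

definition edges_at :: "'a set set \<Rightarrow> 'a \<Rightarrow> 'a set set" where
  "edges_at F x = {e \<in> F. x \<in> e}"

definition in_class_C :: "'a set \<Rightarrow> 'a set set \<Rightarrow> ('a \<Rightarrow> 'b set) \<Rightarrow> bool" where
  "in_class_C V E f \<longleftrightarrow> is_graph V E \<and> (\<forall>x\<in>V. |f x| \<le>o |edges_at E x| )"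

definition is_f_factor :: "'a set \<Rightarrow> 'a set set \<Rightarrow> ('a \<Rightarrow> 'b set) \<Rightarrow> 'a set set \<Rightarrow> bool" where
  "is_f_factor V E f F \<longleftrightarrow> F \<subseteq> E \<and> (\<forall>x\<in>V. |edges_at F x| \<le>o |f x| )"

definition is_perfect_f_factor :: "'a set \<Rightarrow> 'a set set \<Rightarrow> ('a \<Rightarrow> 'b set) \<Rightarrow> 'a set set \<Rightarrow> bool" where
  "is_perfect_f_factor V E f F \<longleftrightarrow> is_f_factor V E f F \<and> (\<forall>x\<in>V. |edges_at F x| =o |f x| )"

definition is_kappa_perfect_f_factor ::
  "'k rel \<Rightarrow> 'a set \<Rightarrow> 'a set set \<Rightarrow> ('a \<Rightarrow> 'b set) \<Rightarrow> 'a set set \<Rightarrow> bool" where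
  "is_kappa_perfect_f_factor kappa V E f F \<longleftrightarrow> is_f_factor V E f F \<and>
     (\<forall>x\<in>V. |f x| \<le>o kappa \<longrightarrow> |edges_at F x| =o |f x| ) \<and>
     (\<forall>x\<in>V. kappa <o |f x| \<longrightarrow> edges_at F x \<noteq> {})"

text \<open>Order-theoretic notions for a well-order W (used with W = cardSuc kappa,
  whose field is the set of ordinals below kappa^+).\<close>

definition wo_less :: "'i rel \<Rightarrow> 'i \<Rightarrow> 'i \<Rightarrow> bool" where
  "wo_less W a b \<longleftrightarrow> (a, b) \<in> W \<and> a \<noteq> b"

definition wo_is_zero :: "'i rel \<Rightarrow> 'i \<Rightarrow> bool" where
  "wo_is_zero W z \<longleftrightarrow> z \<in> Field W \<and> (\<forall>a\<in>Field W. (z, a) \<in> W)"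

definition wo_is_succ :: "'i rel \<Rightarrow> 'i \<Rightarrow> 'i \<Rightarrow> bool" where
  "wo_is_succ W a b \<longleftrightarrow> a \<in> Field W \<and> wo_less W a b \<and> (\<forall>c. wo_less W a c \<longrightarrow> (b, c) \<in> W)"

definition wo_is_limit :: "'i rel \<Rightarrow> 'i \<Rightarrow> bool" where
  "wo_is_limit W l \<longleftrightarrow> l \<in> Field W \<and> \<not> wo_is_zero W l \<and> \<not> (\<exists>a. wo_is_succ W a l)"

definition increasing_continuous :: "'i rel \<Rightarrow> ('i \<Rightarrow> 'a set) \<Rightarrow> bool" where
  "increasing_continuous W A \<longleftrightarrow>
     (\<forall>a b. wo_less W a b \<longrightarrow> A a \<subseteq> A b) \<and>
     (\<forall>l. wo_is_limit W l \<longrightarrow> A l = (\<Union>a\<in>{a. wo_less W a l}. A a))"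

end

(*
  Since |V| = kappa^+, every vertex is low (f x <= kappa) or high (f x = kappa^+).

  Given a perfect f-factor F, enumerate V as (v_alpha) and let A_(alpha+1) arise from A_alpha by
  adding v_alpha and kappa fresh vertices and then closing, in omega rounds, under two operations:
  a low vertex brings in all its F-neighbours, a high vertex brings in one F-neighbour outside
  A_alpha. All stages have size at most kappa, and F restricted to the graph of (iii) is
  kappa-perfect: a low vertex of B_alpha is new in A_(alpha+1) and its F-neighbours lie in
  B_alpha, while a high vertex has its chosen new neighbour.

  Conversely, the union G of kappa-perfect factors of all layers is perfect. A low vertex lies
  in exactly one B_alpha, at the step where it enters, and only that layer has edges at it. A
  high vertex lies in B_beta for every later beta and gets an edge from each of these kappa^+
  layers; edges from different layers differ, since an edge of layer alpha lies inside
  A_(alpha+1) while one of a later layer beta does not lie inside A_beta.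
*)

theory Submission
  imports Defs
begin

section \<open>Well orders\<close>

lemma wo_less_iff_underS: "wo_less W a b \<longleftrightarrow> a \<in> underS W b"
  unfolding wo_less_def underS_def by auto

lemma wo_less_Field: "wo_less W a b \<Longrightarrow> a \<in> Field W \<and> b \<in> Field W"
  unfolding wo_less_def Field_def by auto

lemma increasing_continuous_mono:
  "increasing_continuous W A \<Longrightarrow> (a, b) \<in> W \<Longrightarrow> A a \<subseteq> A b"
  unfolding increasing_continuous_def wo_less_def by (cases "a = b") auto

context
  fixes W :: "'i rel"
  assumes W: "Well_order W"
begin

lemma Well_order_wo_rel: "wo_rel W"
  using W unfolding wo_rel_def .

lemma wo_less_le_trans: "wo_less W a b \<Longrightarrow> (b, c) \<in> W \<Longrightarrow> wo_less W a c"
  using wo_rel.TRANS[OF Well_order_wo_rel] wo_rel.ANTISYM[OF Well_order_wo_rel]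
  unfolding wo_less_def trans_def antisym_def by blast

lemma wo_less_trans: "wo_less W a b \<Longrightarrow> wo_less W b c \<Longrightarrow> wo_less W a c"
  using wo_less_le_trans unfolding wo_less_def[of W b c] by blast

lemma wo_less_not_le: "wo_less W a b \<Longrightarrow> (b, a) \<notin> W"
  using wo_rel.ANTISYM[OF Well_order_wo_rel] unfolding wo_less_def antisym_def by blast

lemma wo_less_linear:
  "a \<in> Field W \<Longrightarrow> b \<in> Field W \<Longrightarrow> a = b \<or> wo_less W a b \<or> wo_less W b a"
  using wo_rel.TOTALS[OF Well_order_wo_rel] unfolding wo_less_def by blast

lemma wo_least:
  assumes "S \<subseteq> Field W" "S \<noteq> {}"
  obtains m where "m \<in> S" "\<And>c. c \<in> S \<Longrightarrow> (m, c) \<in> W"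
  using assms wo_rel.minim_in[OF Well_order_wo_rel] wo_rel.minim_least[OF Well_order_wo_rel]
  by blast

lemma wo_is_succ_exists:
  assumes "wo_less W a c"
  obtains b where "wo_is_succ W a b" "(b, c) \<in> W"
proof -
  have "{b. wo_less W a b} \<subseteq> Field W" "{b. wo_less W a b} \<noteq> {}"
    using assms by (auto dest: wo_less_Field)
  then obtain m where m: "wo_less W a m" and least: "\<And>c. wo_less W a c \<Longrightarrow> (m, c) \<in> W"
    by (rule wo_least) auto
  have "wo_is_succ W a m" using m least unfolding wo_is_succ_def by (auto dest: wo_less_Field)
  then show thesis using that least assms by blast
qed

lemma wo_is_succ_unique: "wo_is_succ W a b \<Longrightarrow> wo_is_succ W a b' \<Longrightarrow> b = b'"
  using wo_rel.ANTISYM[OF Well_order_wo_rel] unfolding wo_is_succ_def antisym_def by blast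

lemma underS_wo_is_succ:
  assumes "wo_is_succ W a b"
  shows "underS W b = insert a (underS W a)"
proof
  show "insert a (underS W a) \<subseteq> underS W b"
    using assms wo_less_trans unfolding wo_is_succ_def by (auto simp: wo_less_iff_underS[symmetric])
  show "underS W b \<subseteq> insert a (underS W a)"
  proof
    fix c assume "c \<in> underS W b"
    then have c: "wo_less W c b" by (simp add: wo_less_iff_underS)
    have "\<not> wo_less W a c" using assms c wo_less_not_le unfolding wo_is_succ_def by blast
    moreover have "a \<in> Field W" "c \<in> Field W"
      using assms c unfolding wo_is_succ_def by (auto dest: wo_less_Field)
    ultimately have "c = a \<or> wo_less W c a" using wo_less_linear by blast
    then show "c \<in> insert a (underS W a)" by (auto simp: wo_less_iff_underS)
  qed
qed

lemma increasing_continuous_entry: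
  assumes A: "increasing_continuous W A" and zero: "\<forall>z. wo_is_zero W z \<longrightarrow> A z = {}"
    and x: "m \<in> Field W" "x \<in> A m"
  obtains a b where "wo_is_succ W a b" "x \<in> A b" "x \<notin> A a"
proof -
  have "{c \<in> Field W. x \<in> A c} \<subseteq> Field W" "{c \<in> Field W. x \<in> A c} \<noteq> {}"
    using x by auto
  then obtain b where b: "b \<in> Field W" "x \<in> A b"
    and least: "\<And>c. c \<in> Field W \<Longrightarrow> x \<in> A c \<Longrightarrow> (b, c) \<in> W"
    by (rule wo_least) auto
  have "\<not> wo_is_limit W b"
  proof
    assume "wo_is_limit W b"
    then obtain c where c: "wo_less W c b" "x \<in> A c"
      using A b(2) unfolding increasing_continuous_def by blast
    then have "(b, c) \<in> W" using least by (auto dest: wo_less_Field)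
    then show False using c(1) wo_less_not_le by blast
  qed
  moreover have "\<not> wo_is_zero W b" using zero b(2) by blast
  ultimately obtain a where a: "wo_is_succ W a b" using b(1) unfolding wo_is_limit_def by blast
  have "x \<notin> A a"
  proof
    assume "x \<in> A a"
    then have "(b, a) \<in> W" using least a unfolding wo_is_succ_def by blast
    then show False using a wo_less_not_le unfolding wo_is_succ_def by blast
  qed
  then show thesis using that a b(2) by blast
qed

end

section \<open>Cardinals\<close>

lemma card_of_subset_ordLeq: "|T| \<le>o r \<Longrightarrow> X \<subseteq> T \<Longrightarrow> |X| \<le>o r"
  by (rule ordLeq_transitive[OF card_of_mono1])

context
  fixes kappa :: "'k rel"
  assumes kappa: "Card_order kappa"
begin

lemma ordIso_cardSuc_not_ordLeq:
  assumes "r =o cardSuc kappa"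
  shows "\<not> r \<le>o kappa"
proof
  assume "r \<le>o kappa"
  then have "cardSuc kappa \<le>o kappa"
    by (rule ordIso_ordLeq_trans[OF ordIso_symmetric[OF assms]])
  then show False using cardSuc_greater[OF kappa] not_ordLess_ordLeq by blast
qed

lemma card_of_ordLeq_cardSuc_cases:
  assumes "|X| \<le>o cardSuc kappa"
  shows "|X| \<le>o kappa \<or> |X| =o cardSuc kappa"
proof (rule disjCI)
  assume "\<not> |X| =o cardSuc kappa"
  then have "\<not> cardSuc kappa \<le>o |X|" using assms ordIso_iff_ordLeq by blast
  then have "\<not> kappa <o |X|" using cardSuc_ordLess_ordLeq[OF kappa card_of_Card_order] by blast
  then show "|X| \<le>o kappa"
    using not_ordLeq_iff_ordLess[OF card_order_on_well_order_on[OF kappa] card_of_Well_order]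
    by blast
qed

lemma card_of_underS_cardSuc: "|underS (cardSuc kappa) a| \<le>o kappa"
proof (cases "a \<in> Field (cardSuc kappa)")
  case True
  then have "|underS (cardSuc kappa) a| <o cardSuc kappa"
    using card_of_underS[OF cardSuc_Card_order[OF kappa]] by blast
  then show ?thesis by (rule cardSuc_ordLeq_ordLess[OF kappa card_of_Card_order, THEN iffD1])
next
  case False
  then have "underS (cardSuc kappa) a = {}" by (rule underS_empty)
  then show ?thesis
    using ordLeq_ordIso_trans[OF card_of_empty card_of_Field_ordIso[OF kappa]] by simp
qed

lemma exists_subset_card_of_ordIso:
  assumes "kappa \<le>o |X|"
  obtains T where "T \<subseteq> X" "|T| =o kappa"
proof -
  have "|Field kappa| \<le>o |X|"
    using ordIso_ordLeq_trans[OF card_of_Field_ordIso[OF kappa] assms] .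
  then obtain g where g: "inj_on g (Field kappa)" "g ` Field kappa \<subseteq> X"
    using card_of_ordLeq[of "Field kappa" X] by blast
  have "|g ` Field kappa| =o |Field kappa|"
    using card_of_ordIsoI[OF inj_on_imp_bij_betw[OF g(1)]] by (rule ordIso_symmetric)
  then have "|g ` Field kappa| =o kappa"
    using card_of_Field_ordIso[OF kappa] by (rule ordIso_transitive)
  then show thesis using that g(2) by blast
qed

context
  assumes inf: "\<not> finite (Field kappa)"
begin

lemma card_of_insert_ordLeq:
  assumes "|X| \<le>o kappa"
  shows "|insert a X| \<le>o kappa"
proof -
  have "Field kappa \<noteq> {}" using inf by auto
  then have "|{a}| \<le>o kappa"
    by (rule ordLeq_ordIso_trans[OF card_of_singl_ordLeq card_of_Field_ordIso[OF kappa]])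
  from card_of_Un_ordLeq_infinite_Field[OF inf this assms kappa] show ?thesis by simp
qed

lemma cardSuc_ordLeq_card_of_Diff:
  assumes X: "cardSuc kappa \<le>o |X|" and S: "|S| \<le>o kappa"
  shows "cardSuc kappa \<le>o |X - S|"
proof -
  have "\<not> |X - S| \<le>o kappa"
  proof
    assume "|X - S| \<le>o kappa"
    then have "|S \<union> (X - S)| \<le>o kappa"
      using card_of_Un_ordLeq_infinite_Field[OF inf S _ kappa] by blast
    moreover have "|X| \<le>o |S \<union> (X - S)|" by (rule card_of_mono1) blast
    ultimately have "cardSuc kappa \<le>o kappa"
      by (meson X ordLeq_transitive)
    then show False using cardSuc_greater[OF kappa] not_ordLess_ordLeq by blast
  qed
  then have "kappa <o |X - S|"
    using not_ordLeq_iff_ordLess[OF card_order_on_well_order_on[OF kappa] card_of_Well_order]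
    by blast
  then show ?thesis using cardSuc_ordLess_ordLeq[OF kappa card_of_Card_order] by blast
qed

lemma cardSuc_ordLeq_card_of_above:
  assumes a: "a \<in> Field (cardSuc kappa)"
  shows "cardSuc kappa \<le>o |{c. wo_less (cardSuc kappa) a c}|"
proof -
  let ?W = "cardSuc kappa"
  have W: "Well_order ?W" using kappa by (rule cardSuc_Well_order)
  have above: "Field ?W - insert a (underS ?W a) \<subseteq> {c. wo_less ?W a c}"
  proof
    fix c assume c: "c \<in> Field ?W - insert a (underS ?W a)"
    then have "a = c \<or> wo_less ?W a c \<or> wo_less ?W c a" using a wo_less_linear[OF W] by blast
    then show "c \<in> {c. wo_less ?W a c}" using c unfolding wo_less_iff_underS by blast
  qed
  have "?W \<le>o |Field ?W|"
    using card_of_Field_ordIso[OF cardSuc_Card_order[OF kappa]] ordIso_iff_ordLeq by blast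
  then have "?W \<le>o |Field ?W - insert a (underS ?W a)|"
    by (rule cardSuc_ordLeq_card_of_Diff[OF _ card_of_insert_ordLeq[OF card_of_underS_cardSuc]])
  then show ?thesis using card_of_mono1[OF above] by (rule ordLeq_transitive)
qed

end

end

section \<open>Graphs and factors\<close>

definition neighbours :: "'a set set \<Rightarrow> 'a \<Rightarrow> 'a set" where
  "neighbours F x = {y. {x, y} \<in> F}"

context
  fixes V :: "'a set" and E :: "'a set set"
  assumes G: "is_graph V E"
begin

lemma edge_subset: "e \<in> E \<Longrightarrow> e \<subseteq> V"
  using G unfolding is_graph_def by simp

lemma edge_doubleton: "e \<in> E \<Longrightarrow> \<exists>u w. u \<noteq> w \<and> e = {u, w}"
  using G unfolding is_graph_def by simp

lemma neighbours_subset: "F \<subseteq> E \<Longrightarrow> neighbours F x \<subseteq> V"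
  unfolding neighbours_def using edge_subset by blast

lemma edges_at_eq_image_neighbours:
  assumes "F \<subseteq> E"
  shows "edges_at F x = (\<lambda>y. {x, y}) ` neighbours F x"
proof
  show "edges_at F x \<subseteq> (\<lambda>y. {x, y}) ` neighbours F x"
  proof
    fix e assume e: "e \<in> edges_at F x"
    then obtain u w where "e = {u, w}" using assms edge_doubleton unfolding edges_at_def by blast
    then have "e = {x, if u = x then w else u}" using e unfolding edges_at_def by auto
    then show "e \<in> (\<lambda>y. {x, y}) ` neighbours F x"
      using e unfolding edges_at_def neighbours_def by blast
  qed
qed (auto simp: edges_at_def neighbours_def)

lemma card_of_edges_at:
  assumes "F \<subseteq> E"
  shows "|edges_at F x| =o |neighbours F x|"
proof -
  have "bij_betw (\<lambda>y. {x, y}) (neighbours F x) (edges_at F x)"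
    unfolding bij_betw_def edges_at_eq_image_neighbours[OF assms]
    by (auto simp: inj_on_def doubleton_eq_iff)
  then show ?thesis by (rule card_of_ordIsoI[THEN ordIso_symmetric])
qed

lemma card_of_edges_at_ordLeq: "F \<subseteq> E \<Longrightarrow> |edges_at F x| \<le>o |V|"
  using ordIso_ordLeq_trans[OF card_of_edges_at card_of_mono1[OF neighbours_subset]] .

end

lemma is_f_factor_subset:
  assumes F: "is_f_factor V E f F" and "B \<subseteq> V" "F' \<subseteq> F" "F' \<subseteq> E'"
  shows "is_f_factor B E' f F'"
  unfolding is_f_factor_def
proof (intro conjI ballI)
  fix x assume "x \<in> B"
  then have "|edges_at F x| \<le>o |f x|" using F \<open>B \<subseteq> V\<close> unfolding is_f_factor_def by blast
  moreover have "edges_at F' x \<subseteq> edges_at F x" using \<open>F' \<subseteq> F\<close> unfolding edges_at_def by blast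
  ultimately show "|edges_at F' x| \<le>o |f x|" by (meson card_of_mono1 ordLeq_transitive)
qed fact

section \<open>Filtrations with kappa-perfect layers\<close>

text \<open>For a = alpha and b = alpha + 1, \<^term>\<open>layer_vertices kappa f A a b\<close> is B_alpha and
  \<^term>\<open>layer_edges kappa E f A a b\<close> the edge set of the graph in condition (iii).\<close>

definition layer_vertices ::
  "'k rel \<Rightarrow> ('a \<Rightarrow> 'b set) \<Rightarrow> ('k set \<Rightarrow> 'a set) \<Rightarrow> 'k set \<Rightarrow> 'k set \<Rightarrow> 'a set" where
  "layer_vertices kappa f A a b = A b - (A a - {x. |f x| =o cardSuc kappa})"

definition layer_edges ::
  "'k rel \<Rightarrow> 'a set set \<Rightarrow> ('a \<Rightarrow> 'b set) \<Rightarrow> ('k set \<Rightarrow> 'a set) \<Rightarrow> 'k set \<Rightarrow> 'k set \<Rightarrow> 'a set set"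
where
  "layer_edges kappa E f A a b =
     {e \<in> E. \<exists>x y. e = {x, y} \<and> x \<in> layer_vertices kappa f A a b \<and> y \<in> A b - A a}"

definition factor_filtration ::
  "'k rel \<Rightarrow> 'a set \<Rightarrow> 'a set set \<Rightarrow> ('a \<Rightarrow> 'b set) \<Rightarrow> ('k set \<Rightarrow> 'a set) \<Rightarrow> bool" where
  "factor_filtration kappa V E f A \<longleftrightarrow>
     increasing_continuous (cardSuc kappa) A \<and>
     (\<forall>a\<in>Field (cardSuc kappa). A a \<subseteq> V) \<and>
     (\<forall>z. wo_is_zero (cardSuc kappa) z \<longrightarrow> A z = {}) \<and>
     V = (\<Union>a\<in>Field (cardSuc kappa). A a) \<and>
     (\<forall>a b. wo_is_succ (cardSuc kappa) a b \<longrightarrow> |A b - A a| =o kappa) \<and>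
     (\<forall>a b. wo_is_succ (cardSuc kappa) a b \<longrightarrow>
        (\<exists>F. is_kappa_perfect_f_factor kappa (layer_vertices kappa f A a b)
               (layer_edges kappa E f A a b) f F))"

locale factor_setting =
  fixes kappa :: "'k rel" and V :: "'a set" and E :: "'a set set" and f :: "'a \<Rightarrow> 'b set"
  assumes kappa: "Card_order kappa" and kappa_infinite: "\<not> finite (Field kappa)"
    and class_C: "in_class_C V E f" and card_V: "|V| =o cardSuc kappa"
begin

abbreviation kappa_plus :: "'k set rel" where
  "kappa_plus \<equiv> cardSuc kappa"

lemma Well_order_kappa_plus: "Well_order kappa_plus"
  using kappa by (rule cardSuc_Well_order)

lemma graph: "is_graph V E"
  using class_C unfolding in_class_C_def by blast

lemma card_of_edges_at_ordLeq_kappa_plus: "F \<subseteq> E \<Longrightarrow> |edges_at F x| \<le>o kappa_plus"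
  using ordLeq_ordIso_trans[OF card_of_edges_at_ordLeq[OF graph] card_V] .

lemma card_of_f_ordLeq_kappa_plus:
  assumes "x \<in> V"
  shows "|f x| \<le>o kappa_plus"
proof -
  have "|f x| \<le>o |edges_at E x|" using class_C assms unfolding in_class_C_def by blast
  then show ?thesis
    using card_of_edges_at_ordLeq_kappa_plus[OF order_refl] by (rule ordLeq_transitive)
qed

lemma low_iff_not_high: "x \<in> V \<Longrightarrow> |f x| \<le>o kappa \<longleftrightarrow> \<not> |f x| =o kappa_plus"
  using card_of_ordLeq_cardSuc_cases[OF kappa card_of_f_ordLeq_kappa_plus]
    ordIso_cardSuc_not_ordLeq[OF kappa] by blast

lemma card_of_not_ordLeq_kappa_iff: "\<not> |X| \<le>o kappa \<longleftrightarrow> kappa <o |X|"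
  using not_ordLeq_iff_ordLess[OF card_order_on_well_order_on[OF kappa] card_of_Well_order] .

lemma wo_is_succ_exists_kappa_plus:
  assumes "c \<in> Field kappa_plus"
  obtains d where "wo_is_succ kappa_plus c d"
proof -
  obtain d where "wo_less kappa_plus c d"
    using infinite_Card_order_limit[OF cardSuc_Card_order[OF kappa] _ assms]
      cardSuc_finite[OF kappa] kappa_infinite unfolding wo_less_def by blast
  then show thesis using wo_is_succ_exists[OF Well_order_kappa_plus] that by blast
qed

end

section \<open>From a perfect factor to a filtration\<close>

locale perfect_factor_enumeration = factor_setting kappa V E f
  for kappa :: "'k rel" and V :: "'a set" and E :: "'a set set" and f :: "'a \<Rightarrow> 'b set" +
  fixes F :: "'a set set" and enum :: "'k set \<Rightarrow> 'a"
  assumes perfect: "is_perfect_f_factor V E f F"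
    and enum: "enum ` Field (cardSuc kappa) = V"
begin

lemma F_subset: "F \<subseteq> E"
  using perfect unfolding is_perfect_f_factor_def is_f_factor_def by blast

lemma card_of_neighbours:
  assumes "x \<in> V"
  shows "|neighbours F x| =o |f x|"
proof -
  have "|edges_at F x| =o |f x|" using perfect assms unfolding is_perfect_f_factor_def by blast
  then show ?thesis
    by (rule ordIso_transitive[OF ordIso_symmetric[OF card_of_edges_at[OF graph F_subset]]])
qed

lemma neighbours_subset_V: "neighbours F x \<subseteq> V"
  using neighbours_subset[OF graph F_subset] .

abbreviation small :: "'a set \<Rightarrow> bool" where
  "small T \<equiv> T \<subseteq> V \<and> |T| \<le>o kappa"

definition pick :: "'a set \<Rightarrow> 'a \<Rightarrow> 'a" where
  "pick S x = (SOME y. y \<in> neighbours F x - S)"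

definition fresh :: "'a set \<Rightarrow> 'a set" where
  "fresh S = (SOME T. T \<subseteq> V - S \<and> |T| =o kappa)"

definition expand :: "'a set \<Rightarrow> 'a set \<Rightarrow> 'a set" where
  "expand S T = T \<union> (\<Union>x \<in> {x \<in> T. |f x| \<le>o kappa}. neighbours F x)
     \<union> pick S ` {x \<in> T. \<not> |f x| \<le>o kappa}"

definition extension :: "'a set \<Rightarrow> 'a \<Rightarrow> 'a set" where
  "extension S v = (\<Union>n. (expand S ^^ n) (insert v (S \<union> fresh S)))"

definition stage :: "'k set \<Rightarrow> 'a set" where
  "stage = wo_rel.worec kappa_plus (\<lambda>A a. \<Union>b \<in> underS kappa_plus a. extension (A b) (enum b))"

lemma pick_in_neighbours:
  assumes x: "x \<in> V" "\<not> |f x| \<le>o kappa" and S: "|S| \<le>o kappa"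
  shows "pick S x \<in> neighbours F x - S"
proof -
  have "\<not> neighbours F x \<subseteq> S"
  proof
    assume "neighbours F x \<subseteq> S"
    with S have "|neighbours F x| \<le>o kappa" by (rule card_of_subset_ordLeq)
    then have "|f x| \<le>o kappa"
      by (rule ordIso_ordLeq_trans[OF ordIso_symmetric[OF card_of_neighbours[OF x(1)]]])
    then show False using x(2) by blast
  qed
  then have "\<exists>y. y \<in> neighbours F x - S" by blast
  then show ?thesis unfolding pick_def by (rule someI_ex)
qed

lemma
  assumes "|S| \<le>o kappa"
  shows fresh_subset: "fresh S \<subseteq> V - S" and card_of_fresh: "|fresh S| =o kappa"
proof -
  have "kappa_plus \<le>o |V|" using card_V ordIso_iff_ordLeq by blast
  then have "kappa_plus \<le>o |V - S|"
    using assms by (rule cardSuc_ordLeq_card_of_Diff[OF kappa kappa_infinite])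
  then have "kappa \<le>o |V - S|"
    by (rule ordLeq_transitive[OF ordLess_imp_ordLeq[OF cardSuc_greater[OF kappa]]])
  then obtain T where "T \<subseteq> V - S" "|T| =o kappa" by (rule exists_subset_card_of_ordIso[OF kappa])
  then have "\<exists>T. T \<subseteq> V - S \<and> |T| =o kappa" by blast
  then have "fresh S \<subseteq> V - S \<and> |fresh S| =o kappa" unfolding fresh_def by (rule someI_ex)
  then show "fresh S \<subseteq> V - S" "|fresh S| =o kappa" by blast+
qed

lemma card_of_neighbours_low: "x \<in> V \<Longrightarrow> |f x| \<le>o kappa \<Longrightarrow> |neighbours F x| \<le>o kappa"
  by (rule ordIso_ordLeq_trans[OF card_of_neighbours])

lemma expand_small:
  assumes T: "small T" and S: "|S| \<le>o kappa"
  shows "small (expand S T)"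
proof
  have "|{x \<in> T. |f x| \<le>o kappa}| \<le>o kappa"
    by (rule card_of_subset_ordLeq[OF conjunct2[OF T]]) blast
  moreover have "\<forall>x \<in> {x \<in> T. |f x| \<le>o kappa}. |neighbours F x| \<le>o kappa"
    using T card_of_neighbours_low by blast
  ultimately have low: "|\<Union>x \<in> {x \<in> T. |f x| \<le>o kappa}. neighbours F x| \<le>o kappa"
    by (rule card_of_UNION_ordLeq_infinite_Field[OF kappa_infinite kappa])
  have "|{x \<in> T. \<not> |f x| \<le>o kappa}| \<le>o kappa"
    by (rule card_of_subset_ordLeq[OF conjunct2[OF T]]) blast
  then have high: "|pick S ` {x \<in> T. \<not> |f x| \<le>o kappa}| \<le>o kappa"
    by (rule ordLeq_transitive[OF card_of_image])
  show "|expand S T| \<le>o kappa"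
    unfolding expand_def
    using card_of_Un_ordLeq_infinite_Field[OF kappa_infinite
        card_of_Un_ordLeq_infinite_Field[OF kappa_infinite conjunct2[OF T] low kappa] high kappa] .
  show "expand S T \<subseteq> V"
    using T pick_in_neighbours[OF _ _ S] neighbours_subset_V unfolding expand_def by blast
qed

lemma extension_small:
  assumes S: "small S" and v: "v \<in> V"
  shows "small (extension S v)"
proof -
  let ?B = "insert v (S \<union> fresh S)"
  have "small ?B"
  proof
    show "?B \<subseteq> V" using S v fresh_subset[of S] by blast
    have "|fresh S| \<le>o kappa" using card_of_fresh[of S] S ordIso_iff_ordLeq by blast
    then show "|?B| \<le>o kappa"
      by (rule card_of_insert_ordLeq[OF kappa kappa_infinite
          card_of_Un_ordLeq_infinite_Field[OF kappa_infinite conjunct2[OF S] _ kappa]])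
  qed
  then have iterates: "small ((expand S ^^ n) ?B)" for n
    by (induction n) (simp_all add: expand_small S)
  have nat: "|UNIV :: nat set| \<le>o kappa"
    using ordLeq_ordIso_trans[OF iffD1[OF infinite_iff_card_of_nat kappa_infinite]
        card_of_Field_ordIso[OF kappa]] .
  have "|\<Union>n. (expand S ^^ n) ?B| \<le>o kappa"
    by (rule card_of_UNION_ordLeq_infinite_Field[OF kappa_infinite kappa nat])
      (use iterates in blast)
  then show ?thesis unfolding extension_def using iterates by blast
qed

lemma extension_base: "insert v (S \<union> fresh S) \<subseteq> extension S v"
  unfolding extension_def by (metis UN_upper UNIV_I funpow_0)

lemma expand_extension: "expand S (extension S v) \<subseteq> extension S v"
proof -
  let ?X = "\<lambda>n. (expand S ^^ n) (insert v (S \<union> fresh S))"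
  have "expand S (\<Union>n. ?X n) \<subseteq> (\<Union>n. expand S (?X n))"
    unfolding expand_def by blast
  also have "\<dots> = (\<Union>n. ?X (Suc n))" by simp
  also have "\<dots> \<subseteq> (\<Union>n. ?X n)" by blast
  finally show ?thesis unfolding extension_def .
qed

lemma neighbours_low_subset_extension:
  "x \<in> extension S v \<Longrightarrow> |f x| \<le>o kappa \<Longrightarrow> neighbours F x \<subseteq> extension S v"
  using expand_extension[of S v] unfolding expand_def by blast

lemma pick_in_extension:
  "x \<in> extension S v \<Longrightarrow> \<not> |f x| \<le>o kappa \<Longrightarrow> pick S x \<in> extension S v"
  using expand_extension[of S v] unfolding expand_def by blast

lemma stage_eq: "stage a = (\<Union>b \<in> underS kappa_plus a. extension (stage b) (enum b))"
proof -
  have "wo_rel.adm_wo kappa_plus (\<lambda>A a. \<Union>b \<in> underS kappa_plus a. extension (A b) (enum b))"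
    unfolding wo_rel.adm_wo_def[OF Well_order_wo_rel[OF Well_order_kappa_plus]] by auto
  then show ?thesis
    unfolding stage_def
    by (subst wo_rel.worec_fixpoint[OF Well_order_wo_rel[OF Well_order_kappa_plus]]) simp_all
qed

lemma stage_small: "small (stage a)"
proof (induction a rule: wo_rel.well_order_induct[OF Well_order_wo_rel[OF Well_order_kappa_plus]])
  case (1 a)
  have "small (extension (stage b) (enum b))" if "b \<in> underS kappa_plus a" for b
  proof (rule extension_small)
    show "small (stage b)" using 1 that unfolding underS_def by blast
    have "b \<in> Field kappa_plus" using that by (rule underS_Field)
    then show "enum b \<in> V" unfolding enum[symmetric] by (rule imageI)
  qed
  moreover from this have "|\<Union>b \<in> underS kappa_plus a. extension (stage b) (enum b)| \<le>o kappa"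
    by (intro card_of_UNION_ordLeq_infinite_Field[OF kappa_infinite kappa
          card_of_underS_cardSuc[OF kappa]]) blast
  ultimately show ?case unfolding stage_eq[of a] by blast
qed

lemma stage_mono:
  assumes "wo_less kappa_plus a b"
  shows "stage a \<subseteq> stage b"
proof -
  have "underS kappa_plus a \<subseteq> underS kappa_plus b"
    using wo_less_trans[OF Well_order_kappa_plus _ assms]
    by (auto simp: wo_less_iff_underS[symmetric])
  then show ?thesis unfolding stage_eq[of a] stage_eq[of b] by blast
qed

lemma stage_zero:
  assumes "wo_is_zero kappa_plus z"
  shows "stage z = {}"
proof -
  have "underS kappa_plus z = {}"
  proof (rule equals0I)
    fix c assume "c \<in> underS kappa_plus z"
    then have c: "wo_less kappa_plus c z" by (simp add: wo_less_iff_underS)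
    then have "(z, c) \<in> kappa_plus"
      using assms unfolding wo_is_zero_def by (auto dest: wo_less_Field)
    then show False using wo_less_not_le[OF Well_order_kappa_plus c] by blast
  qed
  then show ?thesis unfolding stage_eq[of z] by simp
qed

lemma stage_subset_extension: "stage a \<subseteq> extension (stage a) v"
  using extension_base by blast

lemma stage_succ: "wo_is_succ kappa_plus a b \<Longrightarrow> stage b = extension (stage a) (enum a)"
  unfolding stage_eq[of b] underS_wo_is_succ[OF Well_order_kappa_plus]
  using stage_eq[of a] stage_subset_extension[of a "enum a"] by auto

lemma stage_limit:
  assumes "wo_is_limit kappa_plus l"
  shows "stage l = (\<Union>a\<in>{a. wo_less kappa_plus a l}. stage a)"
proof
  show "(\<Union>a\<in>{a. wo_less kappa_plus a l}. stage a) \<subseteq> stage l" using stage_mono by blast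
  show "stage l \<subseteq> (\<Union>a\<in>{a. wo_less kappa_plus a l}. stage a)"
  proof
    fix x assume "x \<in> stage l"
    then obtain c where c: "wo_less kappa_plus c l" "x \<in> extension (stage c) (enum c)"
      unfolding stage_eq[of l] by (auto simp: wo_less_iff_underS)
    obtain b where b: "wo_is_succ kappa_plus c b" "(b, l) \<in> kappa_plus"
      using wo_is_succ_exists[OF Well_order_kappa_plus c(1)] .
    have "b \<noteq> l" using assms b(1) unfolding wo_is_limit_def by blast
    then have "wo_less kappa_plus b l" using b(2) unfolding wo_less_def by blast
    moreover have "x \<in> stage b" using stage_succ[OF b(1)] c(2) by blast
    ultimately show "x \<in> (\<Union>a\<in>{a. wo_less kappa_plus a l}. stage a)" by blast
  qed
qed

lemma stage_Union: "V = (\<Union>a\<in>Field kappa_plus. stage a)"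
proof
  show "(\<Union>a\<in>Field kappa_plus. stage a) \<subseteq> V" using stage_small by blast
  show "V \<subseteq> (\<Union>a\<in>Field kappa_plus. stage a)"
  proof
    fix x assume "x \<in> V"
    then obtain c where c: "c \<in> Field kappa_plus" "x = enum c" unfolding enum[symmetric] by blast
    obtain b where b: "wo_is_succ kappa_plus c b" using c(1) by (rule wo_is_succ_exists_kappa_plus)
    then have "b \<in> Field kappa_plus" unfolding wo_is_succ_def by (auto dest: wo_less_Field)
    moreover have "x \<in> stage b" using stage_succ[OF b] extension_base c(2) by blast
    ultimately show "x \<in> (\<Union>a\<in>Field kappa_plus. stage a)" by blast
  qed
qed

lemma card_of_stage_Diff:
  assumes "wo_is_succ kappa_plus a b"
  shows "|stage b - stage a| =o kappa"
proof -
  have small: "|stage a| \<le>o kappa" using stage_small by blast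
  have "fresh (stage a) \<subseteq> stage b - stage a"
    using fresh_subset[OF small] stage_succ[OF assms] extension_base by blast
  then have "|fresh (stage a)| \<le>o |stage b - stage a|" by (rule card_of_mono1)
  then have "kappa \<le>o |stage b - stage a|"
    by (rule ordIso_ordLeq_trans[OF ordIso_symmetric[OF card_of_fresh[OF small]]])
  moreover have "|stage b - stage a| \<le>o kappa"
    by (rule card_of_subset_ordLeq[OF conjunct2[OF stage_small]]) blast
  ultimately show ?thesis using ordIso_iff_ordLeq by blast
qed

lemma neighbours_low_subset_stage:
  assumes "x \<in> stage c" "|f x| \<le>o kappa"
  shows "neighbours F x \<subseteq> stage c"
proof -
  obtain b where "b \<in> underS kappa_plus c" "x \<in> extension (stage b) (enum b)"
    using assms(1) unfolding stage_eq[of c] by blast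
  then show ?thesis
    using neighbours_low_subset_extension[OF _ assms(2)] unfolding stage_eq[of c] by blast
qed

abbreviation layer :: "'k set \<Rightarrow> 'k set \<Rightarrow> 'a set" where
  "layer \<equiv> layer_vertices kappa f stage"

abbreviation layer_graph :: "'k set \<Rightarrow> 'k set \<Rightarrow> 'a set set" where
  "layer_graph \<equiv> layer_edges kappa E f stage"

lemma edges_at_low_subset_layer_edges:
  assumes ab: "wo_is_succ kappa_plus a b" and x: "x \<in> layer a b" "|f x| \<le>o kappa"
  shows "edges_at F x \<subseteq> layer_graph a b"
proof
  fix e assume e: "e \<in> edges_at F x"
  have "x \<in> V" using x(1) stage_small unfolding layer_vertices_def by blast
  then have new: "x \<in> stage b - stage a"
    using x low_iff_not_high unfolding layer_vertices_def by blast
  obtain y where y: "e = {x, y}" "y \<in> neighbours F x"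
    using e edges_at_eq_image_neighbours[OF graph F_subset] by blast
  have "y \<in> stage b" using y(2) neighbours_low_subset_stage new x(2) by blast
  moreover have "|f y| =o kappa_plus" if "y \<in> stage a"
  proof (rule ccontr) \<comment> \<open>a low y in stage a would have brought its neighbour x in\<close>
    assume "\<not> |f y| =o kappa_plus"
    then have "|f y| \<le>o kappa" using low_iff_not_high neighbours_subset_V y(2) by blast
    moreover have "x \<in> neighbours F y"
      using y(2) unfolding neighbours_def by (simp add: insert_commute)
    ultimately show False using neighbours_low_subset_stage[OF that] new by blast
  qed
  ultimately have "y \<in> layer a b" unfolding layer_vertices_def by blast
  moreover have "e = {y, x}" "e \<in> E" using y e F_subset unfolding edges_at_def by auto
  ultimately show "e \<in> layer_graph a b" using new unfolding layer_edges_def by blast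
qed

lemma pick_edge_in_layer_edges:
  assumes ab: "wo_is_succ kappa_plus a b" and x: "x \<in> layer a b" "\<not> |f x| \<le>o kappa"
  shows "{x, pick (stage a) x} \<in> F \<inter> layer_graph a b"
proof -
  have "x \<in> stage b" using x(1) unfolding layer_vertices_def by blast
  then have "x \<in> extension (stage a) (enum a)" using stage_succ[OF ab] by simp
  then have "pick (stage a) x \<in> stage b" using pick_in_extension x(2) stage_succ[OF ab] by simp
  moreover have "pick (stage a) x \<in> neighbours F x - stage a"
    using pick_in_neighbours[OF _ x(2)] stage_small \<open>x \<in> stage b\<close> by blast
  ultimately show ?thesis using x(1) F_subset unfolding layer_edges_def neighbours_def by blast
qed

lemma kappa_perfect_restriction:
  assumes ab: "wo_is_succ kappa_plus a b"
  shows "is_kappa_perfect_f_factor kappa (layer a b) (layer_graph a b) f (F \<inter> layer_graph a b)"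
  unfolding is_kappa_perfect_f_factor_def
proof (intro conjI ballI impI)
  have "layer a b \<subseteq> V" using stage_small unfolding layer_vertices_def by blast
  then show "is_f_factor (layer a b) (layer_graph a b) f (F \<inter> layer_graph a b)"
    using perfect unfolding is_perfect_f_factor_def by (auto intro: is_f_factor_subset)
next
  fix x assume x: "x \<in> layer a b" "|f x| \<le>o kappa"
  then have "edges_at (F \<inter> layer_graph a b) x = edges_at F x"
    using edges_at_low_subset_layer_edges[OF ab] unfolding edges_at_def by blast
  moreover have "x \<in> V" using x(1) stage_small unfolding layer_vertices_def by blast
  ultimately show "|edges_at (F \<inter> layer_graph a b) x| =o |f x|"
    using perfect unfolding is_perfect_f_factor_def by simp
next
  fix x assume "x \<in> layer a b" "kappa <o |f x|"
  then have "{x, pick (stage a) x} \<in> edges_at (F \<inter> layer_graph a b) x"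
    using pick_edge_in_layer_edges[OF ab] card_of_not_ordLeq_kappa_iff unfolding edges_at_def by blast
  then show "edges_at (F \<inter> layer_graph a b) x \<noteq> {}" by blast
qed

lemma factor_filtration_stage: "factor_filtration kappa V E f stage"
  unfolding factor_filtration_def increasing_continuous_def
proof (intro conjI allI impI ballI)
  show "\<exists>F. is_kappa_perfect_f_factor kappa (layer a b) (layer_graph a b) f F"
    if "wo_is_succ kappa_plus a b" for a b
    using kappa_perfect_restriction[OF that] by blast
qed (use stage_mono stage_limit stage_small stage_zero stage_Union card_of_stage_Diff in auto)

end

context factor_setting
begin

lemma factor_filtration_if_perfect_factor:
  assumes "is_perfect_f_factor V E f F"
  shows "\<exists>A. factor_filtration kappa V E f A"
proof -
  have "|Field kappa_plus| =o |V|"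
    using ordIso_transitive[OF card_of_Field_ordIso[OF cardSuc_Card_order[OF kappa]]
        ordIso_symmetric[OF card_V]] .
  then obtain enum where "bij_betw enum (Field kappa_plus) V" using card_of_ordIso by blast
  then have "enum ` Field kappa_plus = V" unfolding bij_betw_def by blast
  then interpret perfect_factor_enumeration kappa V E f F enum
    using assms by unfold_locales
  show ?thesis using factor_filtration_stage by blast
qed

end

section \<open>From a filtration to a perfect factor\<close>

locale filtered_factor_setting = factor_setting kappa V E f
  for kappa :: "'k rel" and V :: "'a set" and E :: "'a set set" and f :: "'a \<Rightarrow> 'b set" +
  fixes A :: "'k set \<Rightarrow> 'a set"
  assumes filtration: "factor_filtration kappa V E f A"
begin

abbreviation layer :: "'k set \<Rightarrow> 'k set \<Rightarrow> 'a set" where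
  "layer \<equiv> layer_vertices kappa f A"

abbreviation layer_graph :: "'k set \<Rightarrow> 'k set \<Rightarrow> 'a set set" where
  "layer_graph \<equiv> layer_edges kappa E f A"

lemma A_increasing_continuous: "increasing_continuous kappa_plus A"
  and A_zero: "\<forall>z. wo_is_zero kappa_plus z \<longrightarrow> A z = {}"
  and A_Union: "V = (\<Union>a\<in>Field kappa_plus. A a)"
  and layer_factor_exists:
    "wo_is_succ kappa_plus a b \<Longrightarrow>
      \<exists>F. is_kappa_perfect_f_factor kappa (layer a b) (layer_graph a b) f F"
  using filtration unfolding factor_filtration_def by blast+

definition layer_factor :: "'k set \<Rightarrow> 'k set \<Rightarrow> 'a set set" where
  "layer_factor a b = (SOME F. is_kappa_perfect_f_factor kappa (layer a b) (layer_graph a b) f F)"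

definition union_factor :: "'a set set" where
  "union_factor = (\<Union>(a, b) \<in> {(a, b). wo_is_succ kappa_plus a b}. layer_factor a b)"

lemma layer_factor_kappa_perfect:
  "wo_is_succ kappa_plus a b \<Longrightarrow>
     is_kappa_perfect_f_factor kappa (layer a b) (layer_graph a b) f (layer_factor a b)"
  unfolding layer_factor_def by (rule someI_ex[OF layer_factor_exists])

lemma layer_factor_subset: "wo_is_succ kappa_plus a b \<Longrightarrow> layer_factor a b \<subseteq> layer_graph a b"
  using layer_factor_kappa_perfect unfolding is_kappa_perfect_f_factor_def is_f_factor_def by blast

lemma union_factor_subset: "union_factor \<subseteq> E"
  using layer_factor_subset unfolding union_factor_def layer_edges_def by fast

lemma edges_at_union_factor:
  "edges_at union_factor x =
     (\<Union>(a, b) \<in> {(a, b). wo_is_succ kappa_plus a b}. edges_at (layer_factor a b) x)"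
  unfolding union_factor_def edges_at_def by blast

lemma layer_edge_subset: "e \<in> layer_graph a b \<Longrightarrow> e \<subseteq> A b"
  unfolding layer_edges_def layer_vertices_def by blast

lemma layer_edge_not_subset: "e \<in> layer_graph a b \<Longrightarrow> \<not> e \<subseteq> A a"
  unfolding layer_edges_def by blast

lemma entry_exists:
  assumes "x \<in> V"
  obtains a b where "wo_is_succ kappa_plus a b" "x \<in> A b" "x \<notin> A a"
proof -
  obtain m where "m \<in> Field kappa_plus" "x \<in> A m" using assms A_Union by blast
  from increasing_continuous_entry[OF Well_order_kappa_plus A_increasing_continuous A_zero this]
  show thesis using that .
qed

lemma layer_edges_at_entry:
  assumes ab: "wo_is_succ kappa_plus a b" and x: "x \<in> A b" "x \<notin> A a"
    and a'b': "wo_is_succ kappa_plus a' b'" and e: "e \<in> layer_graph a' b'" "x \<in> e"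
  shows "a' = a \<or> |f x| =o kappa_plus"
proof -
  have "a \<in> Field kappa_plus" "a' \<in> Field kappa_plus"
    using ab a'b' unfolding wo_is_succ_def by auto
  then consider "a' = a" | "wo_less kappa_plus a' a" | "wo_less kappa_plus a a'"
    using wo_less_linear[OF Well_order_kappa_plus] by blast
  then show ?thesis
  proof cases
    case 2
    then have "A b' \<subseteq> A a"
      using a'b' increasing_continuous_mono[OF A_increasing_continuous]
      unfolding wo_is_succ_def by blast
    then show ?thesis using layer_edge_subset[OF e(1)] e(2) x(2) by blast
  next
    case 3
    then have "A b \<subseteq> A a'"
      using ab increasing_continuous_mono[OF A_increasing_continuous]
      unfolding wo_is_succ_def by blast
    then have "x \<in> A a'" using x(1) by blast
    then show ?thesis using e unfolding layer_edges_def layer_vertices_def by blast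
  qed simp
qed

lemma degree_union_factor_low:
  assumes x: "x \<in> V" "|f x| \<le>o kappa"
  shows "|edges_at union_factor x| =o |f x|"
proof -
  obtain a b where ab: "wo_is_succ kappa_plus a b" "x \<in> A b" "x \<notin> A a"
    using entry_exists[OF x(1)] .
  have not_high: "\<not> |f x| =o kappa_plus" using x low_iff_not_high by blast
  have "edges_at union_factor x = edges_at (layer_factor a b) x"
  proof
    show "edges_at union_factor x \<subseteq> edges_at (layer_factor a b) x"
    proof
      fix e assume "e \<in> edges_at union_factor x"
      then obtain a' b'
        where a'b': "wo_is_succ kappa_plus a' b'" "e \<in> edges_at (layer_factor a' b') x"
        unfolding edges_at_union_factor by blast
      then have "a' = a"
        using layer_edges_at_entry[OF ab a'b'(1)] layer_factor_subset not_high
        unfolding edges_at_def by blast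
      then have "b' = b" using wo_is_succ_unique[OF Well_order_kappa_plus] ab(1) a'b'(1) by blast
      then show "e \<in> edges_at (layer_factor a b) x" using a'b'(2) \<open>a' = a\<close> by simp
    qed
  qed (use ab(1) edges_at_union_factor in blast)
  moreover have "x \<in> layer a b" using ab unfolding layer_vertices_def by blast
  ultimately show ?thesis
    using layer_factor_kappa_perfect[OF ab(1)] x(2) unfolding is_kappa_perfect_f_factor_def by simp
qed

lemma layer_factor_edges_distinct:
  assumes "wo_is_succ kappa_plus a b" "wo_less kappa_plus a a'" "wo_is_succ kappa_plus a' b'"
    and "e \<in> layer_factor a b" "e' \<in> layer_factor a' b'"
  shows "e \<noteq> e'"
proof -
  have "A b \<subseteq> A a'"
    using assms(1,2) increasing_continuous_mono[OF A_increasing_continuous]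
    unfolding wo_is_succ_def by blast
  moreover have "e \<subseteq> A b" using layer_factor_subset[OF assms(1)] assms(4) layer_edge_subset by blast
  moreover have "\<not> e' \<subseteq> A a'"
    using layer_factor_subset[OF assms(3)] assms(5) layer_edge_not_subset by blast
  ultimately show ?thesis by blast
qed

lemma edge_at_high_in_later_layer:
  assumes x: "|f x| =o kappa_plus" and ab: "wo_is_succ kappa_plus a b" "x \<in> A b"
    and c: "wo_less kappa_plus a c"
  shows "\<exists>e d. wo_is_succ kappa_plus c d \<and> e \<in> edges_at (layer_factor c d) x"
proof -
  have "c \<in> Field kappa_plus" using c by (auto dest: wo_less_Field)
  then obtain d where cd: "wo_is_succ kappa_plus c d" by (rule wo_is_succ_exists_kappa_plus)
  have "(b, d) \<in> kappa_plus"
    using ab(1) c cd wo_less_le_trans[OF Well_order_kappa_plus]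
    unfolding wo_is_succ_def wo_less_def by blast
  then have "x \<in> layer c d"
    using ab(2) x increasing_continuous_mono[OF A_increasing_continuous]
    unfolding layer_vertices_def by blast
  moreover have "kappa <o |f x|" using ordIso_cardSuc_not_ordLeq[OF kappa x] card_of_not_ordLeq_kappa_iff by blast
  ultimately show ?thesis
    using layer_factor_kappa_perfect[OF cd] cd unfolding is_kappa_perfect_f_factor_def by blast
qed

lemma kappa_plus_ordLeq_degree_union_factor_high:
  assumes x: "x \<in> V" "|f x| =o kappa_plus"
  shows "kappa_plus \<le>o |edges_at union_factor x|"
proof -
  obtain a b where ab: "wo_is_succ kappa_plus a b" "x \<in> A b"
    using entry_exists[OF x(1)] by blast
  let ?U = "{c. wo_less kappa_plus a c}"
  have "\<forall>c \<in> ?U. \<exists>e d. wo_is_succ kappa_plus c d \<and> e \<in> edges_at (layer_factor c d) x"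
    using edge_at_high_in_later_layer[OF x(2) ab] by blast
  then have "\<exists>g. \<forall>c \<in> ?U. \<exists>d. wo_is_succ kappa_plus c d \<and> g c \<in> edges_at (layer_factor c d) x"
    by (rule bchoice)
  then obtain g
    where g: "\<forall>c \<in> ?U. \<exists>d. wo_is_succ kappa_plus c d \<and> g c \<in> edges_at (layer_factor c d) x"
    by blast
  have distinct: "g c1 \<noteq> g c2" if c12: "c1 \<in> ?U" "c2 \<in> ?U" "wo_less kappa_plus c1 c2" for c1 c2
    using bspec[OF g c12(1)] bspec[OF g c12(2)] layer_factor_edges_distinct[OF _ c12(3)]
    unfolding edges_at_def by blast
  have "inj_on g ?U"
  proof (rule inj_onI)
    fix c c' assume c: "c \<in> ?U" "c' \<in> ?U" "g c = g c'"
    have "c \<in> Field kappa_plus" "c' \<in> Field kappa_plus" using c by (auto dest: wo_less_Field)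
    then show "c = c'"
      using wo_less_linear[OF Well_order_kappa_plus] distinct[OF c(1,2)] distinct[OF c(2,1)] c(3)
      by blast
  qed
  moreover have "g ` ?U \<subseteq> edges_at union_factor x"
    using g unfolding edges_at_union_factor by blast
  ultimately have "|?U| \<le>o |edges_at union_factor x|"
    using card_of_ordLeq[of ?U "edges_at union_factor x"] by blast
  moreover have "a \<in> Field kappa_plus" using ab(1) unfolding wo_is_succ_def by blast
  then have "kappa_plus \<le>o |?U|" by (rule cardSuc_ordLeq_card_of_above[OF kappa kappa_infinite])
  ultimately show ?thesis by (rule ordLeq_transitive[rotated])
qed

lemma perfect_union_factor: "is_perfect_f_factor V E f union_factor"
proof -
  have "|edges_at union_factor x| =o |f x|" if "x \<in> V" for x
  proof (cases "|f x| \<le>o kappa")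
    case True
    then show ?thesis using degree_union_factor_low that by blast
  next
    case False
    then have high: "|f x| =o kappa_plus" using low_iff_not_high that by blast
    have "|edges_at union_factor x| =o kappa_plus"
      using kappa_plus_ordLeq_degree_union_factor_high[OF that high]
        card_of_edges_at_ordLeq_kappa_plus[OF union_factor_subset] ordIso_iff_ordLeq by blast
    then show ?thesis by (rule ordIso_transitive[OF _ ordIso_symmetric[OF high]])
  qed
  then show ?thesis
    unfolding is_perfect_f_factor_def is_f_factor_def
    using union_factor_subset ordIso_iff_ordLeq by blast
qed

end

context factor_setting
begin

lemma perfect_factor_if_factor_filtration:
  assumes "factor_filtration kappa V E f A"
  shows "\<exists>F. is_perfect_f_factor V E f F"
proof -
  interpret filtered_factor_setting kappa V E f A using assms by unfold_locales
  show ?thesis using perfect_union_factor by blast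
qed

end

theorem theorem3:
  fixes kappa :: "'k rel" and V :: "'a set" and E :: "'a set set" and f :: "'a \<Rightarrow> 'b set"
  assumes "Card_order kappa" and "\<not> finite (Field kappa)"
    and "in_class_C V E f"
    and "|V| =o cardSuc kappa"
  shows "(\<exists>F. is_perfect_f_factor V E f F) \<longleftrightarrow>
    (\<exists>A :: 'k set \<Rightarrow> 'a set.
       increasing_continuous (cardSuc kappa) A \<and>
       (\<forall>a\<in>Field (cardSuc kappa). A a \<subseteq> V) \<and>
       (\<forall>z. wo_is_zero (cardSuc kappa) z \<longrightarrow> A z = {}) \<and>
       V = (\<Union>a\<in>Field (cardSuc kappa). A a) \<and>
       (\<forall>a b. wo_is_succ (cardSuc kappa) a b \<longrightarrow> |A b - A a| =o kappa) \<and>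
       (\<forall>a b. wo_is_succ (cardSuc kappa) a b \<longrightarrow>
          (let B = A b - (A a - {x. |f x| =o cardSuc kappa}) in
           \<exists>F. is_kappa_perfect_f_factor kappa B
                 {e \<in> E. \<exists>x y. e = {x, y} \<and> x \<in> B \<and> y \<in> A b - A a} f F)))"
proof -
  interpret factor_setting kappa V E f using assms by unfold_locales
  have "(\<exists>F. is_perfect_f_factor V E f F) \<longleftrightarrow> (\<exists>A. factor_filtration kappa V E f A)"
    using factor_filtration_if_perfect_factor perfect_factor_if_factor_filtration by blast
  then show ?thesis unfolding factor_filtration_def layer_edges_def layer_vertices_def Let_def .
qed

end
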